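(* Let $q$ be a prime power and $F/\mathbb{F}_q$ an algebraic function field with full constant field $\mathbb{F}_q$ of genus $g\geq 2$. For $n\geq 0$ let $A_n$ be the number of effective divisors of degree $n$ of $F$, for $r\geq1$ let $B_r$ be the number of places of degree $r$ of $F$, let $\Sigma_2=q^{g-1}\sum_{n=0}^{g-2}A_n/q^n$ and $\Delta_2=\{r:1\leq r\leq g-2,\ B_r\geq 1\}$. Then $$\Sigma_2\leq q^{g-1}\prod_{r\in\Delta_2}\left[\sum_{b=0}^{\lfloor\frac{g-2}{r}\rfloor}\frac{1}{q^{rb}}\binom{B_r+b-1}{b}\right].$$ *)

theory Defs
  imports Complex_Main "HOL-Computational_Algebra.Polynomial"
begin

text \<open>Algebraic function fields F/K: the field F is the whole type 'a, and K is a subfield of it.\<close>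

definition subfield :: "'a::field set \<Rightarrow> bool" where
  "subfield K \<longleftrightarrow> 0 \<in> K \<and> 1 \<in> K \<and> (\<forall>x\<in>K. \<forall>y\<in>K. x + y \<in> K \<and> x * y \<in> K)
     \<and> (\<forall>x\<in>K. - x \<in> K \<and> inverse x \<in> K)"

definition algebraic_over :: "'a::field set \<Rightarrow> 'a \<Rightarrow> bool" where
  "algebraic_over K x \<longleftrightarrow> (\<exists>p. p \<noteq> 0 \<and> (\<forall>i. coeff p i \<in> K) \<and> poly p x = 0)"

definition adjoin :: "'a::field set \<Rightarrow> 'a \<Rightarrow> 'a set" where
  "adjoin K x = {poly p x / poly r x | p r. (\<forall>i. coeff p i \<in> K) \<and> (\<forall>i. coeff r i \<in> K) \<and> poly r x \<noteq> 0}"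

definition finite_over :: "'a::field set \<Rightarrow> bool" where
  "finite_over L \<longleftrightarrow> (\<exists>(n::nat) e. \<forall>y. \<exists>c. (\<forall>i<n. c i \<in> L) \<and> y = (\<Sum>i<n. c i * e i))"

definition function_field :: "'a::field set \<Rightarrow> bool" where
  "function_field K \<longleftrightarrow> subfield K \<and> (\<exists>x. \<not> algebraic_over K x \<and> finite_over (adjoin K x))"

definition full_constant_field :: "'a::field set \<Rightarrow> bool" where
  "full_constant_field K \<longleftrightarrow> (\<forall>z. algebraic_over K z \<longrightarrow> z \<in> K)"

definition subring :: "'a::field set \<Rightarrow> bool" where
  "subring R \<longleftrightarrow> 0 \<in> R \<and> 1 \<in> R \<and> (\<forall>x\<in>R. \<forall>y\<in>R. x + y \<in> R \<and> x * y \<in> R) \<and> (\<forall>x\<in>R. - x \<in> R)"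

definition valuation_ring :: "'a::field set \<Rightarrow> 'a set \<Rightarrow> bool" where
  "valuation_ring K R \<longleftrightarrow> subring R \<and> K \<subset> R \<and> R \<noteq> UNIV \<and> (\<forall>z. z \<in> R \<or> inverse z \<in> R)"

definition nonunits :: "'a::field set \<Rightarrow> 'a set" where
  "nonunits R = {z \<in> R. z = 0 \<or> inverse z \<notin> R}"

definition place :: "'a::field set \<Rightarrow> 'a set \<Rightarrow> bool" where
  "place K P \<longleftrightarrow> (\<exists>R. valuation_ring K R \<and> P = nonunits R)"

definition ring_of :: "'a::field set \<Rightarrow> 'a set \<Rightarrow> 'a set" where
  "ring_of K P = (THE R. valuation_ring K R \<and> P = nonunits R)"

text \<open>Normalized discrete valuation v_P (for z \<noteq> 0): z = t^n u with t a prime element, u a unit.\<close>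
definition prime_elem :: "'a::field set \<Rightarrow> 'a set \<Rightarrow> 'a" where
  "prime_elem K P = (SOME t. t \<in> P \<and> P = (\<lambda>w. t * w) ` ring_of K P)"

definition val :: "'a::field set \<Rightarrow> 'a set \<Rightarrow> 'a \<Rightarrow> int" where
  "val K P z = (THE n. \<exists>u. u \<in> ring_of K P \<and> inverse u \<in> ring_of K P \<and> z = prime_elem K P powi n * u)"

text \<open>Degree of a place: dimension of the residue class field O_P/P over K.\<close>
definition place_deg :: "'a::field set \<Rightarrow> 'a set \<Rightarrow> nat" where
  "place_deg K P = (LEAST n. \<exists>e. (\<forall>i<n. e i \<in> ring_of K P) \<and>
      (\<forall>z\<in>ring_of K P. \<exists>c. (\<forall>i<n. c i \<in> K) \<and> z - (\<Sum>i<n. c i * e i) \<in> P))"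

definition divisor :: "'a::field set \<Rightarrow> ('a set \<Rightarrow> int) \<Rightarrow> bool" where
  "divisor K D \<longleftrightarrow> finite {P. D P \<noteq> 0} \<and> (\<forall>P. D P \<noteq> 0 \<longrightarrow> place K P)"

definition effective :: "('a set \<Rightarrow> int) \<Rightarrow> bool" where
  "effective D \<longleftrightarrow> (\<forall>P. D P \<ge> 0)"

definition div_deg :: "'a::field set \<Rightarrow> ('a set \<Rightarrow> int) \<Rightarrow> int" where
  "div_deg K D = (\<Sum>P\<in>{P. D P \<noteq> 0}. D P * int (place_deg K P))"

definition RR_space :: "'a::field set \<Rightarrow> ('a set \<Rightarrow> int) \<Rightarrow> 'a set" where
  "RR_space K A = {x. x = 0 \<or> (\<forall>P. place K P \<longrightarrow> val K P x \<ge> - A P)}"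

definition ell :: "'a::field set \<Rightarrow> ('a set \<Rightarrow> int) \<Rightarrow> nat" where
  "ell K A = (LEAST n. \<exists>e. (\<forall>i<n. e i \<in> RR_space K A) \<and>
      (\<forall>x\<in>RR_space K A. \<exists>c. (\<forall>i<n. c i \<in> K) \<and> x = (\<Sum>i<n. c i * e i)))"

definition genus :: "'a::field set \<Rightarrow> int" where
  "genus K = Sup {div_deg K A - int (ell K A) + 1 | A. divisor K A}"

definition num_eff_divs :: "'a::field set \<Rightarrow> nat \<Rightarrow> nat" where
  "num_eff_divs K n = card {D. divisor K D \<and> effective D \<and> div_deg K D = int n}"

definition num_places :: "'a::field set \<Rightarrow> nat \<Rightarrow> nat" where
  "num_places K r = card {P. place K P \<and> place_deg K P = r}"

end

theory Submission
  imports Defs "HOL-Library.Multiset" "HOL-Library.FuncSet"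
begin

text \<open>
  Grouping the places in the support of an effective divisor D by their degree r, D becomes a
  family of multisets M_r of places of degree r, with deg D = \<Sum>_r r |M_r|.  If deg D \<le> g - 2
  then |M_r| \<le> (g - 2) div r, and there are exactly C(B_r + b - 1, b) multisets of size b on the
  B_r places of degree r.  Since q^(-deg D) = \<Prod>_r q^(-r |M_r|), this encoding injects the sum
  defining \<Sigma>_2 into the expansion of the product.
\<close>

definition weighted_degree :: "('p \<Rightarrow> nat) \<Rightarrow> ('p \<Rightarrow> int) \<Rightarrow> int" where
  "weighted_degree dg D = (\<Sum>P\<in>{P. D P \<noteq> 0}. D P * int (dg P))"

definition effective_divisors_of_degree ::
    "('p \<Rightarrow> bool) \<Rightarrow> ('p \<Rightarrow> nat) \<Rightarrow> nat \<Rightarrow> ('p \<Rightarrow> int) set" where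
  "effective_divisors_of_degree pl dg n =
     {D. finite {P. D P \<noteq> 0} \<and> (\<forall>P. D P \<noteq> 0 \<longrightarrow> pl P) \<and> (\<forall>P. 0 \<le> D P)
         \<and> weighted_degree dg D = int n}"

definition places_of_degree :: "('p \<Rightarrow> bool) \<Rightarrow> ('p \<Rightarrow> nat) \<Rightarrow> nat \<Rightarrow> 'p set" where
  "places_of_degree pl dg r = {P. pl P \<and> dg P = r}"

definition degree_part :: "('p \<Rightarrow> bool) \<Rightarrow> ('p \<Rightarrow> nat) \<Rightarrow> ('p \<Rightarrow> int) \<Rightarrow> nat \<Rightarrow> 'p multiset" where
  "degree_part pl dg D r = (\<Sum>P\<in>places_of_degree pl dg r. replicate_mset (nat (D P)) P)"

lemma weighted_degree_eq_sum_superset: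
  assumes "finite F" "{P. D P \<noteq> 0} \<subseteq> F"
  shows "weighted_degree dg D = (\<Sum>P\<in>F. D P * int (dg P))"
  unfolding weighted_degree_def using assms by (intro sum.mono_neutral_left) auto

lemma effective_divisors_of_degreeD:
  assumes "D \<in> effective_divisors_of_degree pl dg n"
  shows "finite {P. D P \<noteq> 0}" "D P \<noteq> 0 \<Longrightarrow> pl P" "0 \<le> D P" "weighted_degree dg D = int n"
  using assms by (auto simp: effective_divisors_of_degree_def)

lemma degree_le_of_support:
  assumes D: "D \<in> effective_divisors_of_degree pl dg n" and P: "D P \<noteq> 0"
  shows "dg P \<le> n"
proof -
  note D' = effective_divisors_of_degreeD[OF D]
  have "int (dg P) \<le> D P * int (dg P)"
    using D'(3)[of P] P by (simp add: mult_le_cancel_right1)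
  also have "\<dots> \<le> weighted_degree dg D"
    unfolding weighted_degree_def using D'(1,3) P by (intro member_le_sum) auto
  finally show ?thesis using D'(4) by simp
qed

text \<open>A place of degree 0 in the support can be added arbitrarily often without changing the degree.\<close>
lemma infinite_effective_divisors_of_degree_zero_place:
  assumes D: "D \<in> effective_divisors_of_degree pl dg n" and P: "D P \<noteq> 0" and "dg P = 0"
  shows "infinite (effective_divisors_of_degree pl dg n)"
proof
  assume fin: "finite (effective_divisors_of_degree pl dg n)"
  note D' = effective_divisors_of_degreeD[OF D]
  define f where "f k = D(P := D P + int k)" for k :: nat
  have supp: "{Q. f k Q \<noteq> 0} = {Q. D Q \<noteq> 0}" for k
    using D'(3)[of P] P by (auto simp: f_def)
  have "weighted_degree dg (f k) = weighted_degree dg D" for k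
    unfolding weighted_degree_def supp by (intro sum.cong) (auto simp: f_def \<open>dg P = 0\<close>)
  hence "range f \<subseteq> effective_divisors_of_degree pl dg n"
    using D' supp P by (auto simp: effective_divisors_of_degree_def f_def split: if_splits)
  moreover have "inj f" by (auto simp: inj_def f_def dest: fun_cong[of _ _ P])
  ultimately show False using fin finite_subset finite_imageD infinite_UNIV_nat by metis
qed

text \<open>One copy of a place P in the support can be traded for any other place of the same degree.\<close>
lemma infinite_effective_divisors_of_degree_infinite_class:
  assumes D: "D \<in> effective_divisors_of_degree pl dg n" and P: "D P \<noteq> 0"
    and inf: "infinite (places_of_degree pl dg (dg P))"
  shows "infinite (effective_divisors_of_degree pl dg n)"
proof
  assume fin: "finite (effective_divisors_of_degree pl dg n)"
  note D' = effective_divisors_of_degreeD[OF D]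
  have "0 < D P" using D'(3)[of P] P by linarith
  define A where "A = places_of_degree pl dg (dg P) - {P}"
  define f where "f Q = (D(P := D P - 1))(Q := D Q + 1)" for Q
  have "f Q \<in> effective_divisors_of_degree pl dg n" if Q: "Q \<in> A" for Q
  proof -
    have QP: "Q \<noteq> P" "pl Q" "dg Q = dg P" using Q by (auto simp: A_def places_of_degree_def)
    define F where "F = insert Q {P. D P \<noteq> 0}"
    have fF: "finite F" using D'(1) by (simp add: F_def)
    have sub: "{R. f Q R \<noteq> 0} \<subseteq> F" using P by (auto simp: f_def F_def)
    have "weighted_degree dg (f Q) = (\<Sum>R\<in>F. f Q R * int (dg R))"
      by (rule weighted_degree_eq_sum_superset[OF fF sub])
    also have "\<dots> = (\<Sum>R\<in>F. D R * int (dg R) + (if R = Q then int (dg Q) else 0)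
                     - (if R = P then int (dg P) else 0))"
      by (intro sum.cong) (auto simp: f_def QP algebra_simps)
    also have "\<dots> = (\<Sum>R\<in>F. D R * int (dg R))"
      using fF P by (simp add: sum.distrib sum_subtractf F_def QP)
    also have "\<dots> = weighted_degree dg D"
      by (rule weighted_degree_eq_sum_superset[symmetric, OF fF]) (auto simp: F_def)
    finally show ?thesis
      using D' QP P sub fF finite_subset[OF sub fF] \<open>0 < D P\<close>
      by (auto simp: effective_divisors_of_degree_def f_def)
  qed
  hence "f ` A \<subseteq> effective_divisors_of_degree pl dg n" by blast
  moreover have "inj_on f A"
  proof (rule inj_onI)
    fix Q1 Q2 assume "Q1 \<in> A" "f Q1 = f Q2"
    hence "f Q1 Q1 = f Q2 Q1" "Q1 \<noteq> P" by (auto simp: A_def)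
    thus "Q1 = Q2" by (auto simp: f_def split: if_splits)
  qed
  moreover have "infinite A" using inf by (simp add: A_def)
  ultimately show False using fin finite_subset finite_imageD by metis
qed

lemma set_degree_part:
  assumes "finite (places_of_degree pl dg r)"
  shows "set_mset (degree_part pl dg D r) \<subseteq> places_of_degree pl dg r"
  using assms by (auto simp: degree_part_def set_mset_sum split: if_splits)

lemma size_degree_part:
  "size (degree_part pl dg D r) = (\<Sum>P\<in>places_of_degree pl dg r. nat (D P))"
  by (simp add: degree_part_def)

lemma count_degree_part:
  assumes "finite (places_of_degree pl dg r)" "P \<in> places_of_degree pl dg r"
  shows "count (degree_part pl dg D r) P = nat (D P)"
  using assms by (simp add: degree_part_def count_sum sum.delta)

lemma weighted_degree_eq_sum_degree_parts:
  assumes R: "finite R" "\<And>r. r \<in> R \<Longrightarrow> finite (places_of_degree pl dg r)"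
    and nonneg: "\<And>P. 0 \<le> D P"
    and supp: "{P. D P \<noteq> 0} \<subseteq> (\<Union>r\<in>R. places_of_degree pl dg r)"
  shows "weighted_degree dg D = (\<Sum>r\<in>R. int r * int (size (degree_part pl dg D r)))"
proof -
  have "weighted_degree dg D = (\<Sum>P\<in>(\<Union>r\<in>R. places_of_degree pl dg r). D P * int (dg P))"
    using R supp by (intro weighted_degree_eq_sum_superset) auto
  also have "\<dots> = (\<Sum>r\<in>R. \<Sum>P\<in>places_of_degree pl dg r. D P * int (dg P))"
    using R by (intro sum.UNION_disjoint) (auto simp: places_of_degree_def)
  also have "\<dots> = (\<Sum>r\<in>R. \<Sum>P\<in>places_of_degree pl dg r. int r * int (nat (D P)))"
    using nonneg by (intro sum.cong refl) (auto simp: places_of_degree_def)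
  finally show ?thesis by (simp add: size_degree_part sum_distrib_left)
qed

lemma sum_power_multisets_size_le:
  fixes x :: real
  assumes "finite A"
  shows "(\<Sum>M\<in>{M. set_mset M \<subseteq> A \<and> size M \<le> k}. x ^ (r * size M))
     = (\<Sum>b=0..k. x ^ (r * b) * real ((card A + b - 1) choose b))"
proof -
  have split: "{M. set_mset M \<subseteq> A \<and> size M \<le> k} = (\<Union>b\<in>{0..k}. multisets_of_size A b)"
    by (auto simp: multisets_of_size_def)
  have "(\<Sum>M\<in>{M. set_mset M \<subseteq> A \<and> size M \<le> k}. x ^ (r * size M))
      = (\<Sum>b=0..k. \<Sum>M\<in>multisets_of_size A b. x ^ (r * size M))"
    unfolding split using finite_multisets_of_size[OF assms]
    by (intro sum.UNION_disjoint) (auto simp: multisets_of_size_def)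
  also have "\<dots> = (\<Sum>b=0..k. x ^ (r * b) * real ((card A + b - 1) choose b))"
    using assms by (intro sum.cong refl)
      (simp add: multisets_of_size_size card_multisets_of_size cong: sum.cong)
  finally show ?thesis .
qed

lemma finite_multisets_size_le:
  assumes "finite A"
  shows "finite {M. set_mset M \<subseteq> A \<and> size M \<le> k}"
proof -
  have "{M. set_mset M \<subseteq> A \<and> size M \<le> k} = (\<Union>b\<in>{0..k}. multisets_of_size A b)"
    by (auto simp: multisets_of_size_def)
  thus ?thesis using assms by auto
qed

lemma inj_on_degree_parts:
  assumes fin: "\<And>r. r \<in> R \<Longrightarrow> finite (places_of_degree pl dg r)"
    and nonneg: "\<And>D P. D \<in> U \<Longrightarrow> 0 \<le> D P"
    and supp: "\<And>D. D \<in> U \<Longrightarrow> {P. D P \<noteq> 0} \<subseteq> (\<Union>r\<in>R. places_of_degree pl dg r)"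
  shows "inj_on (\<lambda>D. restrict (degree_part pl dg D) R) U"
proof (rule inj_onI, rule ext)
  fix D1 D2 P
  assume D: "D1 \<in> U" "D2 \<in> U"
    and eq: "restrict (degree_part pl dg D1) R = restrict (degree_part pl dg D2) R"
  show "D1 P = D2 P"
  proof (cases "D1 P = 0 \<and> D2 P = 0")
    case False
    then obtain r where r: "r \<in> R" "P \<in> places_of_degree pl dg r" using supp D by blast
    have "degree_part pl dg D1 r = degree_part pl dg D2 r"
      using fun_cong[OF eq, of r] r by simp
    hence "nat (D1 P) = nat (D2 P)" using count_degree_part fin r by metis
    thus ?thesis using nonneg D by (metis int_nat_eq)
  qed simp
qed

text \<open>
  The encoding D \<mapsto> (r \<mapsto> degree_part D r) sends degree \<le> N into multisets of size \<le> N div r,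
  and the weight x^deg D factors along it.
\<close>
lemma sum_power_weighted_degree_le_prod:
  fixes x :: real
  assumes R: "finite R" "\<And>r. r \<in> R \<Longrightarrow> 1 \<le> r \<and> finite (places_of_degree pl dg r)"
    and nonneg: "\<And>D P. D \<in> U \<Longrightarrow> 0 \<le> D P"
    and supp: "\<And>D. D \<in> U \<Longrightarrow> {P. D P \<noteq> 0} \<subseteq> (\<Union>r\<in>R. places_of_degree pl dg r)"
    and deg: "\<And>D. D \<in> U \<Longrightarrow> weighted_degree dg D \<le> int N"
    and "0 \<le> x"
  shows "(\<Sum>D\<in>U. x ^ nat (weighted_degree dg D))
    \<le> (\<Prod>r\<in>R. \<Sum>b=0..N div r. x ^ (r * b) * real ((card (places_of_degree pl dg r) + b - 1) choose b))"
proof -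
  define psi where "psi D = restrict (degree_part pl dg D) R" for D
  define Dom where
    "Dom = PiE R (\<lambda>r. {M. set_mset M \<subseteq> places_of_degree pl dg r \<and> size M \<le> N div r})"
  define w where "w M = (\<Prod>r\<in>R. x ^ (r * size (M r)))" for M :: "nat \<Rightarrow> 'a multiset"
  have deg_parts: "weighted_degree dg D = (\<Sum>r\<in>R. int r * int (size (degree_part pl dg D r)))"
    if "D \<in> U" for D
    using R nonneg supp that by (intro weighted_degree_eq_sum_degree_parts) auto
  have "psi D \<in> Dom" if D: "D \<in> U" for D
  proof -
    have "degree_part pl dg D r
        \<in> {M. set_mset M \<subseteq> places_of_degree pl dg r \<and> size M \<le> N div r}" if r: "r \<in> R" for r
    proof -
      have "int r * int (size (degree_part pl dg D r)) \<le> weighted_degree dg D"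
        unfolding deg_parts[OF D] using R r by (intro member_le_sum) auto
      with deg[OF D] have "size (degree_part pl dg D r) * r \<le> N"
        by (simp add: mult.commute flip: of_nat_mult)
      thus ?thesis using R(2)[OF r] set_degree_part[of pl dg r D]
        by (simp add: less_eq_div_iff_mult_less_eq)
    qed
    thus ?thesis by (auto simp: Dom_def psi_def)
  qed
  hence "psi ` U \<subseteq> Dom" by blast
  have w_psi: "x ^ nat (weighted_degree dg D) = w (psi D)" if "D \<in> U" for D
    by (simp add: deg_parts[OF that] w_def psi_def power_sum flip: of_nat_mult of_nat_sum)
  have "inj_on psi U"
    unfolding psi_def using R(2) nonneg supp by (intro inj_on_degree_parts) auto
  have "finite Dom" unfolding Dom_def using R by (auto intro!: finite_PiE finite_multisets_size_le)
  have "(\<Sum>D\<in>U. x ^ nat (weighted_degree dg D)) = (\<Sum>M\<in>psi ` U. w M)"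
    using w_psi \<open>inj_on psi U\<close> by (simp add: sum.reindex)
  also have "\<dots> \<le> (\<Sum>M\<in>Dom. w M)"
    using \<open>finite Dom\<close> \<open>psi ` U \<subseteq> Dom\<close> \<open>0 \<le> x\<close>
    by (intro sum_mono2) (auto simp: w_def intro!: prod_nonneg)
  also have "\<dots> = (\<Prod>r\<in>R. \<Sum>M\<in>{M. set_mset M \<subseteq> places_of_degree pl dg r \<and> size M \<le> N div r}.
                    x ^ (r * size M))"
    unfolding Dom_def w_def using R by (intro prod_sum_PiE[symmetric] finite_multisets_size_le) auto
  also have "\<dots> = (\<Prod>r\<in>R. \<Sum>b=0..N div r.
                    x ^ (r * b) * real ((card (places_of_degree pl dg r) + b - 1) choose b))"
    using R by (intro prod.cong refl sum_power_multisets_size_le) auto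
  finally show ?thesis .
qed

text \<open>
  Degrees n with infinitely many effective divisors contribute card = 0 on the left, so only
  finite ones matter; their supports avoid places of degree 0 and infinite degree classes.
\<close>
lemma sum_card_effective_divisors_le_prod:
  fixes x :: real
  assumes "0 \<le> x"
  shows "(\<Sum>n=0..N. real (card (effective_divisors_of_degree pl dg n)) * x ^ n)
    \<le> (\<Prod>r\<in>{r. 1 \<le> r \<and> r \<le> N \<and> card (places_of_degree pl dg r) \<ge> 1}.
          \<Sum>b=0..N div r. x ^ (r * b) * real ((card (places_of_degree pl dg r) + b - 1) choose b))"
    (is "_ \<le> (\<Prod>r\<in>?R. _)")
proof -
  let ?E = "effective_divisors_of_degree pl dg"
  define T where "T n = (if finite (?E n) then ?E n else {})" for n
  define U where "U = (\<Union>n\<in>{0..N}. T n)"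
  have R: "finite ?R" "\<And>r. r \<in> ?R \<Longrightarrow> 1 \<le> r \<and> finite (places_of_degree pl dg r)"
    by (auto intro: finite_subset[of _ "{..N}"] card_ge_0_finite)
  have U: "\<exists>n\<le>N. D \<in> ?E n \<and> finite (?E n)" if "D \<in> U" for D
    using that by (auto simp: U_def T_def split: if_splits)
  have supp: "{P. D P \<noteq> 0} \<subseteq> (\<Union>r\<in>?R. places_of_degree pl dg r)" if D: "D \<in> U" for D
  proof
    fix P assume P: "P \<in> {P. D P \<noteq> 0}"
    from U[OF D] obtain n where n: "n \<le> N" "D \<in> ?E n" "finite (?E n)" by blast
    have "dg P \<noteq> 0"
      using infinite_effective_divisors_of_degree_zero_place[OF n(2), of P] P n(3) by auto
    moreover have "finite (places_of_degree pl dg (dg P))"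
      using infinite_effective_divisors_of_degree_infinite_class[OF n(2), of P] P n(3) by auto
    moreover have "P \<in> places_of_degree pl dg (dg P)"
      using effective_divisors_of_degreeD(2)[OF n(2)] P by (simp add: places_of_degree_def)
    moreover have "dg P \<le> N" using degree_le_of_support[OF n(2), of P] P n(1) by simp
    ultimately show "P \<in> (\<Union>r\<in>?R. places_of_degree pl dg r)"
      by (intro UN_I[of "dg P"]) (auto simp: Suc_le_eq card_gt_0_iff)
  qed
  have "(\<Sum>n=0..N. real (card (?E n)) * x ^ n) = (\<Sum>n=0..N. real (card (T n)) * x ^ n)"
    by (intro sum.cong) (auto simp: T_def)
  also have "\<dots> = (\<Sum>n=0..N. \<Sum>D\<in>T n. x ^ nat (weighted_degree dg D))"
    by (intro sum.cong refl) (auto simp: T_def effective_divisors_of_degree_def)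
  also have "\<dots> = (\<Sum>D\<in>U. x ^ nat (weighted_degree dg D))"
    unfolding U_def by (intro sum.UNION_disjoint[symmetric])
      (auto simp: T_def effective_divisors_of_degree_def split: if_splits)
  also have "\<dots> \<le> (\<Prod>r\<in>?R. \<Sum>b=0..N div r.
                    x ^ (r * b) * real ((card (places_of_degree pl dg r) + b - 1) choose b))"
  proof (rule sum_power_weighted_degree_le_prod[OF R _ supp _ \<open>0 \<le> x\<close>])
    fix D assume "D \<in> U"
    then obtain n where n: "n \<le> N" "D \<in> ?E n" using U by blast
    show "\<And>P. 0 \<le> D P" "weighted_degree dg D \<le> int N"
      using effective_divisors_of_degreeD(3,4)[OF n(2)] n(1) by simp_all
  qed
  finally show ?thesis .
qed

lemma num_eff_divs_eq_card:
  "num_eff_divs K n = card (effective_divisors_of_degree (place K) (place_deg K) n)"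
  unfolding num_eff_divs_def effective_divisors_of_degree_def divisor_def effective_def
    div_deg_def weighted_degree_def
  by (rule arg_cong[where f = card]) auto

lemma num_places_eq_card: "num_places K r = card (places_of_degree (place K) (place_deg K) r)"
  by (simp add: num_places_def places_of_degree_def)

theorem theorem3p9:
  fixes K :: "'a::field set" and q g :: nat
  assumes "function_field K" and "full_constant_field K"
    and "finite K" and "card K = q"
    and "genus K = int g" and "g \<ge> 2"
  shows "real q ^ (g - 1) * (\<Sum>n = 0..g - 2. real (num_eff_divs K n) / real q ^ n)
     \<le> real q ^ (g - 1) *
       (\<Prod>r\<in>{r. 1 \<le> r \<and> r \<le> g - 2 \<and> num_places K r \<ge> 1}.
          (\<Sum>b = 0..(g - 2) div r.
             1 / real q ^ (r * b) * real ((num_places K r + b - 1) choose b)))"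
proof -
  have "(\<Sum>n = 0..g - 2. real (num_eff_divs K n) / real q ^ n)
      = (\<Sum>n = 0..g - 2. real (card (effective_divisors_of_degree (place K) (place_deg K) n))
                          * (1 / real q) ^ n)"
    by (simp add: num_eff_divs_eq_card power_one_over)
  also have "\<dots> \<le> (\<Prod>r\<in>{r. 1 \<le> r \<and> r \<le> g - 2 \<and> num_places K r \<ge> 1}.
          (\<Sum>b = 0..(g - 2) div r.
             (1 / real q) ^ (r * b) * real ((num_places K r + b - 1) choose b)))"
    unfolding num_places_eq_card by (rule sum_card_effective_divisors_le_prod) simp
  finally show ?thesis by (intro mult_left_mono) (simp_all add: power_one_over)
qed

end
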